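(* For every integer $m\ge 3$, the matrix $M_m$ defined below is $3$-decodable (whatever maximizing index $i$ is chosen at each step of the recursion).
   Context: Binary matrices $M_m$ with $m$ rows are defined recursively; write $c(\ell)$ for the number of columns of $M_\ell$, $I_3$ for the $3\times 3$ identity matrix. Let $M_3=[\,I_3\mid \mathbf{1}\,]$ ($3\times 4$, $\mathbf{1}$ the all-ones column). Let $M_4=\begin{bmatrix}\mathbf{0}_{1\times 3} & \mathbf{1}_{1\times 4}\\ I_3 & M_3\end{bmatrix}$ ($4\times 7$). For $m\ge 5$, choose $i\in\{2,\dots,m-3\}$ maximizing $i\cdot c(m-i)$, put $c=c(m-i)$, and let $M_m=[\,L\mid R\,]$, where $L$ is the $m\times 3$ matrix whose first $m-3$ rows are zero and whose last $3$ rows form $I_3$, and $R$ is the $m\times ic$ matrix whose first $i$ rows are such that row $r$ ($1\le r\le i$) has ones exactly in columns $(r-1)c+1,\dots,rc$, and whose last $m-i$ rows form $[\,M_{m-i}\ M_{m-i}\ \cdots\ M_{m-i}\,]$ ($i$ copies side by side). For a binary matrix $M$ and a nonempty set $S$ of its columns, $S$ is a stopping set if the submatrix formed by $S$ has no row with exactly one $1$; $s(M)$ is the minimum size of a stopping set ($+\infty$ if none); $M$ is $d$-decodable if $s(M)\ge d+1$. *)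

theory Defs
  imports Main "HOL-Library.Extended_Nat"
begin

text \<open>Binary matrices are represented as functions A :: nat => nat => bool
  (entry in row r, column j, both 0-indexed), together with explicit numbers of rows
  and columns. Entries outside the range are irrelevant.\<close>

text \<open>Number of columns c(m) of M_m. It does not depend on which maximizing index is
  chosen, since c(m) = 3 + max_{2 <= i <= m-3} i * c(m-i).\<close>
function ncols :: "nat \<Rightarrow> nat" where
  "ncols m = (if m < 3 then 0 else if m = 3 then 4 else if m = 4 then 7
              else 3 + Max ((\<lambda>i. i * ncols (m - i)) ` {2..m-3}))"
  by auto
termination
  by (relation "measure id") auto

declare ncols.simps[simp del]

definition valid_choice :: "(nat \<Rightarrow> nat) \<Rightarrow> bool" where
  "valid_choice ch \<longleftrightarrow> (\<forall>m\<ge>5. ch m \<in> {2..m-3} \<and>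
      (\<forall>i\<in>{2..m-3}. i * ncols (m - i) \<le> ch m * ncols (m - ch m)))"

text \<open>The index actually used (clamped for termination; equal to ch m for valid choices).\<close>
definition idx :: "(nat \<Rightarrow> nat) \<Rightarrow> nat \<Rightarrow> nat" where
  "idx ch m = (if ch m \<in> {2..m-3} then ch m else 2)"

text \<open>The matrix M_m (for the index choice ch), 0-indexed: Mmat ch m r j is the entry
  in row r < m and column j < ncols m.\<close>
function Mmat :: "(nat \<Rightarrow> nat) \<Rightarrow> nat \<Rightarrow> nat \<Rightarrow> nat \<Rightarrow> bool" where
  "Mmat ch m r j =
     (if m < 3 then False
      else if m = 3 then (j = r \<or> j = 3)
      else if m = 4 then
        (if r = 0 then 3 \<le> j
         else if j < 3 then j = r - 1 else Mmat ch 3 (r - 1) (j - 3))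
      else
        (let i = idx ch m; c = ncols (m - i) in
         if j < 3 then (m - 3 \<le> r \<and> j = r - (m - 3))
         else if r < i then (j - 3) div c = r
         else Mmat ch (m - i) (r - i) ((j - 3) mod c)))"
  by auto
termination
  by (relation "measure (\<lambda>(ch, m, r, j). m)") (auto simp: idx_def Let_def)

declare Mmat.simps[simp del]

definition stopping_set :: "nat \<Rightarrow> nat \<Rightarrow> (nat \<Rightarrow> nat \<Rightarrow> bool) \<Rightarrow> nat set \<Rightarrow> bool" where
  "stopping_set rows cols A S \<longleftrightarrow> S \<subseteq> {..<cols} \<and> S \<noteq> {} \<and>
      (\<forall>r<rows. card {j \<in> S. A r j} \<noteq> 1)"

text \<open>s(M): minimum size of a stopping set, infinity if none.\<close>
definition stop_dist :: "nat \<Rightarrow> nat \<Rightarrow> (nat \<Rightarrow> nat \<Rightarrow> bool) \<Rightarrow> enat" where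
  "stop_dist rows cols A = Inf ((\<lambda>S. enat (card S)) ` {S. stopping_set rows cols A S})"

definition decodable :: "nat \<Rightarrow> nat \<Rightarrow> nat \<Rightarrow> (nat \<Rightarrow> nat \<Rightarrow> bool) \<Rightarrow> bool" where
  "decodable d rows cols A \<longleftrightarrow> stop_dist rows cols A \<ge> enat (d + 1)"

end

theory Submission
  imports Defs
begin

text \<open>Induction on m, viewing M_4 as the same construction with a single block. Let S be a set
  of at most three columns. If no row of the top part of R meets S exactly once, then every block
  of R meets S in none or at least two columns, so S meets at most one block. If S lies inside one
  block, its columns are distinct columns of M_(m-i), and a row of M_(m-i) meeting them once
  reappears in the bottom part; if S lies in L, an identity row works. In the remaining case, two
  columns of one block plus a column j of L, we need a row of M_(m-i) separating the two columns
  other than the one carrying the 1 of column j. Hence the induction also carries the invariant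
  that distinct columns stay distinct after deleting any one of the last three rows.\<close>

text \<open>The matrix [L | R] of the recursion, built from B = M_(m-i) with c = c(m-i) columns.\<close>
definition block_step :: "nat \<Rightarrow> nat \<Rightarrow> nat \<Rightarrow> (nat \<Rightarrow> nat \<Rightarrow> bool) \<Rightarrow> nat \<Rightarrow> nat \<Rightarrow> bool" where
  "block_step m i c B r j =
     (if j < 3 then m - 3 \<le> r \<and> j = r - (m - 3)
      else if r < i then (j - 3) div c = r
      else B (r - i) ((j - 3) mod c))"

lemma block_step_left: "j < 3 \<Longrightarrow> block_step m i c B r j \<longleftrightarrow> r = m - 3 + j"
  unfolding block_step_def by auto

lemma block_step_top:
  "r < i \<Longrightarrow> i \<le> m - 3 \<Longrightarrow> block_step m i c B r j \<longleftrightarrow> 3 \<le> j \<and> (j - 3) div c = r"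
  unfolding block_step_def by auto

lemma block_step_bottom: "3 \<le> j \<Longrightarrow> block_step m i c B (r + i) j = B r ((j - 3) mod c)"
  unfolding block_step_def by simp

lemma block_index_less:
  fixes j i c :: nat
  assumes "3 \<le> j" "j < 3 + i * c"
  shows "(j - 3) div c < i"
  using assms by (cases "c = 0") (simp_all add: div_less_iff_less_mult mult.commute)

lemma block_coords_inj:
  fixes a b c :: nat
  assumes "3 \<le> a" "3 \<le> b" "(a - 3) div c = (b - 3) div c" "(a - 3) mod c = (b - 3) mod c"
  shows "a = b"
  using assms by (metis div_mult_mod_eq diff_add_inverse2 le_add_diff_inverse2)

definition separated_avoiding_tail_row :: "nat \<Rightarrow> nat \<Rightarrow> (nat \<Rightarrow> nat \<Rightarrow> bool) \<Rightarrow> bool" where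
  "separated_avoiding_tail_row n k A \<longleftrightarrow>
     (\<forall>a<k. \<forall>b<k. a \<noteq> b \<longrightarrow> (\<forall>\<rho>\<ge>n - 3. \<exists>r<n. r \<noteq> \<rho> \<and> A r a \<noteq> A r b))"

lemma decodable_iff:
  "decodable d rows cols A \<longleftrightarrow>
     (\<forall>S \<subseteq> {..<cols}. S \<noteq> {} \<longrightarrow> card S \<le> d \<longrightarrow> (\<exists>r<rows. card {j \<in> S. A r j} = 1))"
proof -
  have "decodable d rows cols A \<longleftrightarrow>
      (\<forall>S. stopping_set rows cols A S \<longrightarrow> d + 1 \<le> card S)"
    unfolding decodable_def stop_dist_def le_Inf_iff by auto
  also have "\<dots> \<longleftrightarrow>
      (\<forall>S \<subseteq> {..<cols}. S \<noteq> {} \<longrightarrow> card S \<le> d \<longrightarrow> (\<exists>r<rows. card {j \<in> S. A r j} = 1))"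
    unfolding stopping_set_def by (metis Suc_eq_plus1 not_less_eq_eq)
  finally show ?thesis .
qed

lemma separated_block_step:
  assumes "3 \<le> n" "m = n + i" "0 < c" "separated_avoiding_tail_row n c B"
  shows "separated_avoiding_tail_row m (3 + i * c) (block_step m i c B)"
  unfolding separated_avoiding_tail_row_def
proof (intro allI impI)
  fix a b \<rho>
  assume a: "a < 3 + i * c" and b: "b < 3 + i * c" and "a \<noteq> b" and \<rho>: "m - 3 \<le> \<rho>"
  let ?A = "block_step m i c B"
  have im: "i \<le> m - 3" using assms by simp
  have top_row: "\<exists>r<m. r \<noteq> \<rho> \<and> ?A r x \<noteq> ?A r y"
    if "3 \<le> x" "x < 3 + i * c" "\<not> (3 \<le> y \<and> (y - 3) div c = (x - 3) div c)" for x y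
    using that block_index_less[OF that(1,2)] im \<rho>
    by (intro exI[of _ "(x - 3) div c"]) (auto simp: block_step_top)
  show "\<exists>r<m. r \<noteq> \<rho> \<and> ?A r a \<noteq> ?A r b"
  proof (cases "a < 3 \<and> b < 3")
    case True
    then show ?thesis
      using \<open>a \<noteq> b\<close> assms
      by (cases "m - 3 + a = \<rho>")
        (auto simp: block_step_left intro: exI[of _ "m - 3 + a"] exI[of _ "m - 3 + b"])
  next
    case False
    show ?thesis
    proof (cases "3 \<le> a \<and> 3 \<le> b \<and> (a - 3) div c = (b - 3) div c")
      case True
      then have "(a - 3) mod c \<noteq> (b - 3) mod c"
        using block_coords_inj \<open>a \<noteq> b\<close> by blast
      moreover have "n - 3 \<le> \<rho> - i" using \<rho> assms by simp
      ultimately obtain r where "r < n" "r \<noteq> \<rho> - i"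
        and "B r ((a - 3) mod c) \<noteq> B r ((b - 3) mod c)"
        using assms(3,4) unfolding separated_avoiding_tail_row_def
        by (meson mod_less_divisor)
      then show ?thesis
        using True assms \<rho> block_step_bottom[of _ m i c B r]
        by (intro exI[of _ "r + i"]) auto
    next
      case False
      then consider "3 \<le> a" "\<not> (3 \<le> b \<and> (b - 3) div c = (a - 3) div c)"
        | "3 \<le> b" "\<not> (3 \<le> a \<and> (a - 3) div c = (b - 3) div c)"
        using \<open>\<not> (a < 3 \<and> b < 3)\<close> by fastforce
      then show ?thesis
      proof cases
        case 1
        then show ?thesis using top_row a by blast
      next
        case 2
        then obtain r where "r < m" "r \<noteq> \<rho>" "?A r b \<noteq> ?A r a" using top_row b by blast
        then show ?thesis by metis
      qed
    qed
  qed
qed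

lemma finite_subset_card_le_Suc:
  assumes "finite S" "T \<subseteq> S" "card S \<le> Suc (card T)"
  shows "S = T \<or> (\<exists>y. y \<notin> T \<and> S = insert y T)"
proof (cases "S = T")
  case False
  then obtain y where y: "y \<in> S" "y \<notin> T" using assms(2) by blast
  have "finite T" using assms(1,2) finite_subset by blast
  then have "card S \<le> card (insert y T)" using assms(3) y(2) by simp
  moreover have "insert y T \<subseteq> S" using y assms(2) by blast
  ultimately have "S = insert y T" using card_seteq[OF assms(1)] by blast
  then show ?thesis using y by blast
qed simp

lemma unique_row_in_one_block:
  assumes "decodable 3 n c B" "m = n + i" "0 < c"
    and "S \<noteq> {}" "card S \<le> 3" "\<And>j. j \<in> S \<Longrightarrow> 3 \<le> j \<and> (j - 3) div c = b"
  shows "\<exists>r<m. card {j \<in> S. block_step m i c B r j} = 1"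
proof -
  define f where "f j = (j - 3) mod c" for j
  have inj: "inj_on f S"
    using assms(6) block_coords_inj unfolding inj_on_def f_def by metis
  have "f ` S \<subseteq> {..<c}" "f ` S \<noteq> {}" "card (f ` S) \<le> 3"
    using assms(3-5) card_image[OF inj] by (auto simp: f_def)
  then obtain r where "r < n" and r: "card {k \<in> f ` S. B r k} = 1"
    using assms(1) unfolding decodable_iff by blast
  have "{k \<in> f ` S. B r k} = f ` {j \<in> S. block_step m i c B (r + i) j}"
    using assms(6) by (auto simp: block_step_bottom f_def)
  moreover have "card (f ` {j \<in> S. block_step m i c B (r + i) j}) =
      card {j \<in> S. block_step m i c B (r + i) j}"
    by (rule card_image[OF inj_on_subset[OF inj]]) blast
  ultimately have "card {j \<in> S. block_step m i c B (r + i) j} = 1"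
    using r by simp
  then show ?thesis using \<open>r < n\<close> assms(2) by (intro exI[of _ "r + i"]) auto
qed

lemma unique_row_pair_in_block_and_left:
  assumes "separated_avoiding_tail_row n c B" "3 \<le> n" "m = n + i" "0 < c"
    and "y < 3" "a \<noteq> a'" "3 \<le> a" "3 \<le> a'" "(a - 3) div c = (a' - 3) div c"
  shows "\<exists>r<m. card {j \<in> {y, a, a'}. block_step m i c B r j} = 1"
proof -
  have "(a - 3) mod c \<noteq> (a' - 3) mod c"
    using assms(6-9) block_coords_inj by blast
  then obtain r where "r < n" "r \<noteq> n - 3 + y"
    and differ: "B r ((a - 3) mod c) \<noteq> B r ((a' - 3) mod c)"
    using assms(1,4) unfolding separated_avoiding_tail_row_def
    by (meson le_add1 mod_less_divisor)
  then have "\<not> block_step m i c B (r + i) y"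
    using assms(2,3,5) by (simp add: block_step_left)
  moreover have "block_step m i c B (r + i) a \<noteq> block_step m i c B (r + i) a'"
    using differ assms(7,8) by (simp add: block_step_bottom)
  ultimately have "{j \<in> {y, a, a'}. block_step m i c B (r + i) j} =
      (if block_step m i c B (r + i) a then {a} else {a'})"
    by auto
  then have "card {j \<in> {y, a, a'}. block_step m i c B (r + i) j} = 1"
    by simp
  then show ?thesis using \<open>r < n\<close> assms(3) by (intro exI[of _ "r + i"]) auto
qed

lemma unique_row_alone_in_block:
  assumes "i \<le> m - 3" "x \<in> S" "3 \<le> x" "x < 3 + i * c"
    and "\<And>j. j \<in> S \<Longrightarrow> 3 \<le> j \<Longrightarrow> (j - 3) div c = (x - 3) div c \<Longrightarrow> j = x"
  shows "\<exists>r<m. card {j \<in> S. block_step m i c B r j} = 1"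
proof -
  let ?b = "(x - 3) div c"
  have "?b < i" using block_index_less assms(3,4) .
  then have "{j \<in> S. block_step m i c B ?b j} = {x}"
    using assms by (auto simp: block_step_top)
  then show ?thesis using \<open>?b < i\<close> assms(1) by (intro exI[of _ ?b]) auto
qed

lemma decodable_block_step:
  assumes "3 \<le> n" "m = n + i" "0 < c"
    and "separated_avoiding_tail_row n c B" "decodable 3 n c B"
  shows "decodable 3 m (3 + i * c) (block_step m i c B)"
  unfolding decodable_iff
proof (intro allI impI)
  fix S assume S: "S \<subseteq> {..<3 + i * c}" "S \<noteq> {}" "card S \<le> 3"
  let ?A = "block_step m i c B"
  have im: "i \<le> m - 3" using assms by simp
  have "finite S" using S(1) finite_subset by blast
  show "\<exists>r<m. card {j \<in> S. ?A r j} = 1"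
  proof (cases "S \<subseteq> {..<3}")
    case True
    obtain x where "x \<in> S" using S(2) by blast
    then have "{j \<in> S. ?A (m - 3 + x) j} = {x}" and "m - 3 + x < m"
      using True assms by (auto simp: block_step_left)
    then show ?thesis by (intro exI[of _ "m - 3 + x"]) auto
  next
    case False
    then obtain x where x: "x \<in> S" "3 \<le> x" by force
    define T where "T = {j \<in> S. 3 \<le> j \<and> (j - 3) div c = (x - 3) div c}"
    have "x \<in> T" "T \<subseteq> S" "finite T" using x \<open>finite S\<close> by (auto simp: T_def)
    show ?thesis
    proof (cases "T = {x}")
      case True
      then show ?thesis
        using unique_row_alone_in_block[OF im x] S(1) x(1) unfolding T_def by blast
    next
      case False
      then obtain x' where "x' \<in> T" "x' \<noteq> x" using \<open>x \<in> T\<close> by blast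
      then have "card {x, x'} \<le> card T" using \<open>x \<in> T\<close> \<open>finite T\<close> by (intro card_mono) auto
      then have "2 \<le> card T" using \<open>x' \<noteq> x\<close> by simp
      then consider "S = T" | y where "y \<notin> T" "S = insert y T"
        using finite_subset_card_le_Suc[OF \<open>finite S\<close> \<open>T \<subseteq> S\<close>] S(3) by fastforce
      then show ?thesis
      proof cases
        case 1
        then show ?thesis
          using unique_row_in_one_block[OF assms(5,2,3) S(2,3)] unfolding T_def by blast
      next
        case (2 y)
        then have "card T = 2" using S(3) \<open>finite T\<close> \<open>2 \<le> card T\<close> by simp
        then obtain a a' where a: "T = {a, a'}" "a \<noteq> a'" by (meson card_2_iff)
        show ?thesis
        proof (cases "y < 3")
          case True
          have "a \<in> T" "a' \<in> T" using a(1) by auto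
          then have same_block: "3 \<le> a" "3 \<le> a'" "(a - 3) div c = (a' - 3) div c"
            unfolding T_def by auto
          have "S = {y, a, a'}" using 2(2) a(1) by simp
          then show ?thesis
            using unique_row_pair_in_block_and_left[OF assms(4,1,2,3) True a(2) same_block]
            by (simp only:)
        next
          case False
          then have "y \<in> S" "3 \<le> y" "y < 3 + i * c" using 2(2) S(1) by auto
          moreover have "j = y"
            if "j \<in> S" "3 \<le> j" "(j - 3) div c = (y - 3) div c" for j
            using that 2 \<open>y \<in> S\<close> \<open>3 \<le> y\<close> unfolding T_def by auto
          ultimately show ?thesis using unique_row_alone_in_block[OF im] by blast
        qed
      qed
    qed
  qed
qed

lemma separated_avoiding_tail_row_cong:
  assumes "\<And>r j. r < n \<Longrightarrow> j < k \<Longrightarrow> A r j = A' r j"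
  shows "separated_avoiding_tail_row n k A \<longleftrightarrow> separated_avoiding_tail_row n k A'"
proof -
  have "A r a \<noteq> A r b \<longleftrightarrow> A' r a \<noteq> A' r b" if "r < n" "a < k" "b < k" for r a b
    using that assms by simp
  then show ?thesis unfolding separated_avoiding_tail_row_def by blast
qed

lemma decodable_cong:
  assumes "\<And>r j. r < rows \<Longrightarrow> j < cols \<Longrightarrow> A r j = A' r j"
  shows "decodable d rows cols A \<longleftrightarrow> decodable d rows cols A'"
proof -
  have "{j \<in> S. A r j} = {j \<in> S. A' r j}" if "S \<subseteq> {..<cols}" "r < rows" for S r
    using that assms by auto
  then show ?thesis unfolding decodable_iff by (simp cong: conj_cong)
qed

lemma ncols_ge_3: "3 \<le> n \<Longrightarrow> 3 \<le> ncols n"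
  by (subst ncols.simps) auto

lemma ncols_3: "ncols 3 = 4"
  by (subst ncols.simps) simp

lemma ncols_valid_choice:
  assumes "valid_choice ch" "5 \<le> m"
  shows "ncols m = 3 + ch m * ncols (m - ch m)"
proof -
  have "ch m \<in> {2..m-3}" "\<forall>i\<in>{2..m-3}. i * ncols (m - i) \<le> ch m * ncols (m - ch m)"
    using assms unfolding valid_choice_def by auto
  then have "Max ((\<lambda>i. i * ncols (m - i)) ` {2..m-3}) = ch m * ncols (m - ch m)"
    by (intro Max_eqI) auto
  then show ?thesis using assms(2) by (subst ncols.simps) simp
qed

lemma Mmat_3: "Mmat ch 3 r j \<longleftrightarrow> j = r \<or> j = 3"
  by (subst Mmat.simps) simp

lemma separated_avoiding_tail_row_Mmat_3: "separated_avoiding_tail_row 3 4 (Mmat ch 3)"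
  unfolding separated_avoiding_tail_row_def Mmat_3
proof (intro allI impI)
  fix a b \<rho> :: nat assume "a < 4" "b < 4" "a \<noteq> b"
  then have "a \<in> {0, 1, 2, 3}" "b \<in> {0, 1, 2, 3}" by auto
  then have "(0 \<noteq> \<rho> \<and> ((a = 0 \<or> a = 3) \<noteq> (b = 0 \<or> b = 3))) \<or>
      (1 \<noteq> \<rho> \<and> ((a = 1 \<or> a = 3) \<noteq> (b = 1 \<or> b = 3))) \<or>
      (2 \<noteq> \<rho> \<and> ((a = 2 \<or> a = 3) \<noteq> (b = 2 \<or> b = 3)))"
    using \<open>a \<noteq> b\<close> by auto
  moreover have "0 < (3::nat)" "1 < (3::nat)" "2 < (3::nat)" by simp_all
  ultimately show "\<exists>r<3. r \<noteq> \<rho> \<and> (a = r \<or> a = 3) \<noteq> (b = r \<or> b = 3)"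
    by blast
qed

lemma decodable_Mmat_3: "decodable 3 3 4 (Mmat ch 3)"
  unfolding decodable_iff Mmat_3
proof (intro allI impI)
  fix S :: "nat set" assume S: "S \<subseteq> {..<4}" "S \<noteq> {}" "card S \<le> 3"
  show "\<exists>r<3. card {j \<in> S. j = r \<or> j = 3} = 1"
  proof (cases "3 \<in> S")
    case False
    obtain x where "x \<in> S" using S(2) by blast
    moreover have "x < 3" using \<open>x \<in> S\<close> S(1) False by (cases "x = 3") auto
    moreover have "{j \<in> S. j = x \<or> j = 3} = {x}" using \<open>x \<in> S\<close> False by auto
    ultimately show ?thesis by auto
  next
    case True
    have "\<not> {0, 1, 2, 3} \<subseteq> S"
    proof
      assume "{0, 1, 2, 3} \<subseteq> S"
      then have "card {0, 1, 2, 3 :: nat} \<le> card S"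
        using finite_subset[OF S(1)] by (intro card_mono) auto
      then show False using S(3) by simp
    qed
    then obtain r where "r \<in> {0, 1, 2}" "r \<notin> S" using True by blast
    then have "r < 3" "{j \<in> S. j = r \<or> j = 3} = {3}" using True by auto
    then show ?thesis by auto
  qed
qed

lemma Mmat_recursion:
  assumes "valid_choice ch" "4 \<le> m"
  obtains i where "1 \<le> i" "3 \<le> m - i" "ncols m = 3 + i * ncols (m - i)"
    "\<And>r j. r < m \<Longrightarrow> j < ncols m \<Longrightarrow>
       Mmat ch m r j = block_step m i (ncols (m - i)) (Mmat ch (m - i)) r j"
proof (cases "m = 4")
  case True
  have "ncols 4 = 3 + 1 * ncols 3" by (subst ncols.simps) (simp add: ncols_3)
  moreover have "Mmat ch 4 r j = block_step 4 1 (ncols 3) (Mmat ch 3) r j" if "j < 7" for r j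
    using that by (subst Mmat.simps) (auto simp: block_step_def ncols_3)
  ultimately show ?thesis using True that[of 1] by (simp add: ncols_3)
next
  case False
  then have "5 \<le> m" using assms(2) by simp
  then have "ch m \<in> {2..m-3}" "idx ch m = ch m"
    using assms(1) by (auto simp: valid_choice_def idx_def)
  moreover have
    "Mmat ch m r j = block_step m (idx ch m) (ncols (m - idx ch m)) (Mmat ch (m - idx ch m)) r j"
    for r j using \<open>5 \<le> m\<close> by (subst Mmat.simps) (simp add: Let_def block_step_def)
  ultimately show ?thesis
    using ncols_valid_choice[OF assms(1) \<open>5 \<le> m\<close>] \<open>5 \<le> m\<close>
    by (intro that[of "ch m"]) auto
qed

lemma Mmat_invariants:
  assumes "valid_choice ch" "3 \<le> m"
  shows "separated_avoiding_tail_row m (ncols m) (Mmat ch m) \<and> decodable 3 m (ncols m) (Mmat ch m)"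
  using assms(2)
proof (induction m rule: less_induct)
  case (less m)
  show ?case
  proof (cases "m = 3")
    case True
    then show ?thesis
      using separated_avoiding_tail_row_Mmat_3 decodable_Mmat_3 by (simp add: ncols_3)
  next
    case False
    then have "4 \<le> m" using less.prems by simp
    then obtain i where i: "1 \<le> i" "3 \<le> m - i" "ncols m = 3 + i * ncols (m - i)"
      and M: "\<And>r j. r < m \<Longrightarrow> j < ncols m \<Longrightarrow>
        Mmat ch m r j = block_step m i (ncols (m - i)) (Mmat ch (m - i)) r j"
      using Mmat_recursion[OF assms(1)] by blast
    have m: "m = (m - i) + i" and c: "0 < ncols (m - i)"
      using i(2) ncols_ge_3[OF i(2)] by auto
    have IH: "separated_avoiding_tail_row (m - i) (ncols (m - i)) (Mmat ch (m - i))"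
      "decodable 3 (m - i) (ncols (m - i)) (Mmat ch (m - i))"
      using less.IH[of "m - i"] i(1,2) by auto
    have "separated_avoiding_tail_row m (ncols m) (Mmat ch m) \<longleftrightarrow>
        separated_avoiding_tail_row m (ncols m) (block_step m i (ncols (m - i)) (Mmat ch (m - i)))"
      by (rule separated_avoiding_tail_row_cong) (simp add: M)
    moreover have "decodable 3 m (ncols m) (Mmat ch m) \<longleftrightarrow>
        decodable 3 m (ncols m) (block_step m i (ncols (m - i)) (Mmat ch (m - i)))"
      by (rule decodable_cong) (simp add: M)
    ultimately show ?thesis
      using separated_block_step[OF i(2) m c IH(1)] decodable_block_step[OF i(2) m c IH]
      unfolding i(3) by blast
  qed
qed

theorem lemma5p3:
  fixes ch :: "nat \<Rightarrow> nat" and m :: nat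
  assumes "valid_choice ch" and "m \<ge> 3"
  shows "decodable 3 m (ncols m) (Mmat ch m)"
  using Mmat_invariants[OF assms] by blast

end
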